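(* Let $m$ be a positive integer, $\gamma\in C^m(\mathbb{R},\mathbb{R}^3)$, and $K\subseteq\mathbb{R}$ a compact set containing at least $m+1$ points and having finitely many isolated points. If $\gamma$ satisfies the discrete $A/V$ condition on $K$, then $\gamma$ satisfies the $A/V$ condition on $K$. Moreover, if $m=1$, the same conclusion holds for any compact $K\subseteq\mathbb{R}$ containing at least $2$ points.
   Context: $C^m(\mathbb{R},\mathbb{R}^3)$: curves whose components are $m$-times continuously differentiable with bounded $m$th derivative. For $\gamma=(f,g,h)$ and $a\in\mathbb{R}$, $T_af(x)=\sum_{k=0}^m\frac{f^{(k)}(a)}{k!}(x-a)^k$ (similarly $T_ag$); $A(\gamma;a,b)= h(b)-h(a)-2\int_a^b\big((T_af)'T_ag-(T_ag)'T_af\big) + 2f(a)(g(b)-T_ag(b)) - 2g(a)(f(b)-T_af(b))$, $V(\gamma;a,b)=(b-a)^{2m}+(b-a)^m\int_a^b(|(T_af)'|+|(T_ag)'|)$. $\gamma$ satisfies the $A/V$ condition on $E$ if for every $\varepsilon>0$ there is $\delta>0$ with $|A(\gamma;a,b)/V(\gamma;a,b)|<\varepsilon$ for all $a,b\in E$ with $0<b-a<\delta$. For $X$ a set of $m+1$ distinct points, $P(X;\phi)$ is the unique polynomial of degree $\le m$ agreeing with $\phi$ on $X$; $P_f=P(X;f)$, $P_g=P(X;g)$, and for $a,b\in X$: $A[X,\gamma;a,b]=h(b)-h(a)-2\int_a^b(P_f'P_g-P_g'P_f)$, $V[X,\gamma;a,b]=\operatorname{diam}(X)^{2m}+\operatorname{diam}(X)^m\int_a^b(|P_f'|+|P_g'|)$.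 $\gamma$ satisfies the discrete $A/V$ condition on $E$ if for every $\varepsilon>0$ there is $\delta>0$ such that $|A[X,\gamma;a,b]/V[X,\gamma;a,b]|<\varepsilon$ for all $X\subseteq E$ with $\#X=m+1$, $\operatorname{diam}X<\delta$, and $a,b\in X$ with $a<b$. *)

theory Defs
  imports "HOL-Analysis.Analysis" "HOL-Computational_Algebra.Polynomial"
begin

definition Cm :: "nat \<Rightarrow> (real \<Rightarrow> real) \<Rightarrow> bool" where
  "Cm m \<phi> \<longleftrightarrow> (\<forall>k<m. \<forall>x. ((deriv ^^ k) \<phi>) differentiable (at x))
     \<and> continuous_on UNIV ((deriv ^^ m) \<phi>)
     \<and> bounded (range ((deriv ^^ m) \<phi>))"

definition taylorT :: "nat \<Rightarrow> real \<Rightarrow> (real \<Rightarrow> real) \<Rightarrow> real \<Rightarrow> real" where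
  "taylorT m a \<phi> x = (\<Sum>k\<le>m. (deriv ^^ k) \<phi> a / fact k * (x - a) ^ k)"

definition AVA :: "nat \<Rightarrow> (real \<Rightarrow> real) \<Rightarrow> (real \<Rightarrow> real) \<Rightarrow> (real \<Rightarrow> real) \<Rightarrow> real \<Rightarrow> real \<Rightarrow> real" where
  "AVA m f g h a b =
     h b - h a
     - 2 * integral {a..b} (\<lambda>x. deriv (taylorT m a f) x * taylorT m a g x
                              - deriv (taylorT m a g) x * taylorT m a f x)
     + 2 * f a * (g b - taylorT m a g b) - 2 * g a * (f b - taylorT m a f b)"

definition AVV :: "nat \<Rightarrow> (real \<Rightarrow> real) \<Rightarrow> (real \<Rightarrow> real) \<Rightarrow> real \<Rightarrow> real \<Rightarrow> real" where
  "AVV m f g a b =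
     (b - a) ^ (2 * m)
     + (b - a) ^ m * integral {a..b} (\<lambda>x. \<bar>deriv (taylorT m a f) x\<bar> + \<bar>deriv (taylorT m a g) x\<bar>)"

definition AV_condition :: "nat \<Rightarrow> (real \<Rightarrow> real) \<Rightarrow> (real \<Rightarrow> real) \<Rightarrow> (real \<Rightarrow> real) \<Rightarrow> real set \<Rightarrow> bool" where
  "AV_condition m f g h E \<longleftrightarrow>
     (\<forall>\<epsilon>>0. \<exists>\<delta>>0. \<forall>a\<in>E. \<forall>b\<in>E. 0 < b - a \<and> b - a < \<delta> \<longrightarrow>
        \<bar>AVA m f g h a b / AVV m f g a b\<bar> < \<epsilon>)"

definition interp :: "nat \<Rightarrow> real set \<Rightarrow> (real \<Rightarrow> real) \<Rightarrow> real poly" where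
  "interp m X \<phi> = (THE p. degree p \<le> m \<and> (\<forall>x\<in>X. poly p x = \<phi> x))"

definition dA :: "nat \<Rightarrow> real set \<Rightarrow> (real \<Rightarrow> real) \<Rightarrow> (real \<Rightarrow> real) \<Rightarrow> (real \<Rightarrow> real) \<Rightarrow> real \<Rightarrow> real \<Rightarrow> real" where
  "dA m X f g h a b =
     h b - h a
     - 2 * integral {a..b} (\<lambda>x. poly (pderiv (interp m X f)) x * poly (interp m X g) x
                              - poly (pderiv (interp m X g)) x * poly (interp m X f) x)"

definition dV :: "nat \<Rightarrow> real set \<Rightarrow> (real \<Rightarrow> real) \<Rightarrow> (real \<Rightarrow> real) \<Rightarrow> real \<Rightarrow> real \<Rightarrow> real" where
  "dV m X f g a b =
     diameter X ^ (2 * m)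
     + diameter X ^ m * integral {a..b} (\<lambda>x. \<bar>poly (pderiv (interp m X f)) x\<bar> + \<bar>poly (pderiv (interp m X g)) x\<bar>)"

definition discrete_AV_condition :: "nat \<Rightarrow> (real \<Rightarrow> real) \<Rightarrow> (real \<Rightarrow> real) \<Rightarrow> (real \<Rightarrow> real) \<Rightarrow> real set \<Rightarrow> bool" where
  "discrete_AV_condition m f g h E \<longleftrightarrow>
     (\<forall>\<epsilon>>0. \<exists>\<delta>>0. \<forall>X. X \<subseteq> E \<and> finite X \<and> card X = m + 1 \<and> diameter X < \<delta> \<longrightarrow>
        (\<forall>a\<in>X. \<forall>b\<in>X. a < b \<longrightarrow> \<bar>dA m X f g h a b / dV m X f g a b\<bar> < \<epsilon>))"

end

theory Submission
  imports Defs
begin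

text \<open>
  Fix nearby points \<open>a < b\<close> of \<open>K\<close>. Once \<open>b - a\<close> is below the gaps around the finitely many
  isolated points, \<open>a\<close> is a limit point of \<open>K\<close>, so we can add \<open>m - 1\<close> points of \<open>K\<close> accumulating
  geometrically at \<open>a\<close> to get a node set \<open>X \<ni> a, b\<close> of diameter \<open>\<le> 2(b - a)\<close> on which every node
  \<open>j \<noteq> a\<close> is at distance \<open>\<ge> |j - a|/2\<close> from the others (for \<open>m = 1\<close>, \<open>X = {a, b}\<close> needs nothing).
  On \<open>X\<close> the interpolation polynomial is the Taylor polynomial at \<open>a\<close> plus the Lagrange
  interpolant \<open>U\<close> of the Taylor remainder, which is \<open>o(|j - a|^m)\<close> uniformly in \<open>a\<close>. The separation
  keeps the Lagrange weights under control, so \<open>U = o((b - a)^m)\<close> and \<open>U' = o((b - a)^(m-1))\<close> on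
  \<open>[a, b]\<close>. Expanding the area integral, \<open>A - A[X]\<close> is \<open>o(V)\<close> (the correction terms of \<open>A\<close> are
  precisely the boundary terms \<open>U(b)\<close>), and \<open>V[X] = O(V)\<close>; hence the discrete condition on \<open>X\<close>
  controls \<open>A/V\<close>.
\<close>

section \<open>Lagrange interpolation\<close>

definition lagrange_basis :: "real set \<Rightarrow> real \<Rightarrow> real poly" where
  "lagrange_basis X j = smult (inverse (\<Prod>k\<in>X-{j}. j - k)) (\<Prod>k\<in>X-{j}. [:-k, 1:])"

definition lagrange_interp :: "real set \<Rightarrow> (real \<Rightarrow> real) \<Rightarrow> real poly" where
  "lagrange_interp X \<phi> = (\<Sum>j\<in>X. smult (\<phi> j) (lagrange_basis X j))"

lemma prod_diff_nonzero:
  fixes X :: "real set"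
  assumes "finite X"
  shows "(\<Prod>k\<in>X-{j}. j - k) \<noteq> 0"
  using assms by (simp add: prod_zero_iff)

lemma poly_lagrange_basis:
  "poly (lagrange_basis X j) x = (\<Prod>k\<in>X-{j}. x - k) / (\<Prod>k\<in>X-{j}. j - k)"
  by (simp add: lagrange_basis_def poly_prod field_simps)

lemma poly_pderiv_lagrange_basis:
  "poly (pderiv (lagrange_basis X j)) x =
     (\<Sum>i\<in>X-{j}. \<Prod>k\<in>X-{j}-{i}. x - k) / (\<Prod>k\<in>X-{j}. j - k)"
  by (simp add: lagrange_basis_def pderiv_smult pderiv_prod poly_sum poly_prod pderiv_pCons
      field_simps)

lemma poly_lagrange_interp:
  assumes "finite X" "i \<in> X"
  shows "poly (lagrange_interp X \<phi>) i = \<phi> i"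
proof -
  have "poly (lagrange_basis X j) i = (if j = i then 1 else 0)" if "j \<in> X" for j
    using assms prod_diff_nonzero[OF assms(1), of j] by (auto simp: poly_lagrange_basis prod_zero_iff)
  then have "poly (lagrange_interp X \<phi>) i = (\<Sum>j\<in>X. if j = i then \<phi> i else 0)"
    unfolding lagrange_interp_def poly_sum by (intro sum.cong) auto
  also have "\<dots> = \<phi> i"
    using assms by simp
  finally show ?thesis .
qed

lemma degree_lagrange_interp:
  assumes "finite X"
  shows "degree (lagrange_interp X \<phi>) \<le> card X - 1"
proof -
  have "degree (lagrange_basis X j) \<le> card X - 1" if "j \<in> X" for j
  proof -
    have "degree (lagrange_basis X j) \<le> degree (\<Prod>k\<in>X-{j}. [:-k, 1:])"
      unfolding lagrange_basis_def by (rule degree_smult_le)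
    also have "\<dots> \<le> sum (degree \<circ> (\<lambda>k. [:-k, 1:])) (X-{j})"
      using assms by (intro degree_prod_sum_le) auto
    also have "\<dots> = card X - 1"
      using assms that by simp
    finally show ?thesis .
  qed
  with assms show ?thesis
    unfolding lagrange_interp_def by (intro degree_sum_le) (auto intro: order.trans[OF degree_smult_le])
qed

lemma interp_eq_add_lagrange_interp:
  assumes "finite X" "card X = m + 1" "degree p \<le> m"
  shows "interp m X \<phi> = p + lagrange_interp X (\<lambda>x. \<phi> x - poly p x)"
  unfolding interp_def
proof (rule the_equality)
  let ?q = "p + lagrange_interp X (\<lambda>x. \<phi> x - poly p x)"
  have deg: "degree ?q \<le> m"
    using assms degree_lagrange_interp[OF assms(1)] by (intro degree_add_le) auto
  then show "degree ?q \<le> m \<and> (\<forall>x\<in>X. poly ?q x = \<phi> x)"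
    using assms(1) by (simp add: poly_lagrange_interp)
  fix q
  assume "degree q \<le> m \<and> (\<forall>x\<in>X. poly q x = \<phi> x)"
  then show "q = ?q"
    using deg assms(1,2) by (intro poly_eqI_degree[of X]) (auto simp: poly_lagrange_interp)
qed

lemma abs_prod_le_power:
  fixes f :: "'a \<Rightarrow> real"
  assumes "\<And>k. k \<in> A \<Longrightarrow> \<bar>f k\<bar> \<le> D"
  shows "\<bar>prod f A\<bar> \<le> D ^ card A"
proof -
  have "\<bar>prod f A\<bar> = (\<Prod>k\<in>A. \<bar>f k\<bar>)"
    by (simp add: abs_prod)
  also have "\<dots> \<le> (\<Prod>k\<in>A. D)"
    by (intro prod_mono) (simp add: assms)
  finally show ?thesis
    by simp
qed

lemma abs_mult_divide_le:
  fixes y P Q M B :: real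
  assumes "\<bar>y\<bar> \<le> M * \<bar>P\<bar>" "P \<noteq> 0" "\<bar>Q\<bar> \<le> B"
  shows "\<bar>y * (Q / P)\<bar> \<le> M * B"
proof -
  have "\<bar>y\<bar> / \<bar>P\<bar> \<le> M"
    using assms(1,2) by (simp add: pos_divide_le_eq mult.commute)
  moreover have "0 \<le> M"
    using order.trans[OF _ \<open>\<bar>y\<bar> / \<bar>P\<bar> \<le> M\<close>] by simp
  ultimately have "\<bar>y\<bar> / \<bar>P\<bar> * \<bar>Q\<bar> \<le> M * B"
    using assms(3) by (intro mult_mono) auto
  then show ?thesis
    by (simp add: abs_mult)
qed

lemma abs_poly_lagrange_interp_le:
  fixes X :: "real set" and \<phi> :: "real \<Rightarrow> real" and M D x :: real
  assumes "finite X"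
    and weight: "\<And>j. j \<in> X \<Longrightarrow> \<bar>\<phi> j\<bar> \<le> M * \<bar>\<Prod>k\<in>X-{j}. j - k\<bar>"
    and near: "\<And>k. k \<in> X \<Longrightarrow> \<bar>x - k\<bar> \<le> D"
  shows "\<bar>poly (lagrange_interp X \<phi>) x\<bar> \<le> card X * (M * D ^ (card X - 1))"
proof -
  have "\<bar>\<Prod>k\<in>X-{j}. x - k\<bar> \<le> D ^ (card X - 1)" if "j \<in> X" for j
    using abs_prod_le_power[of "X-{j}" "\<lambda>k. x - k" D] near assms(1) that by simp
  then have "\<bar>\<phi> j * poly (lagrange_basis X j) x\<bar> \<le> M * D ^ (card X - 1)" if "j \<in> X" for j
    unfolding poly_lagrange_basis using that weight prod_diff_nonzero[OF assms(1)]
    by (intro abs_mult_divide_le)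
  then have "(\<Sum>j\<in>X. \<bar>\<phi> j * poly (lagrange_basis X j) x\<bar>) \<le> card X * (M * D ^ (card X - 1))"
    using sum_mono[of X _ "\<lambda>_. M * D ^ (card X - 1)"] by simp
  then show ?thesis
    unfolding lagrange_interp_def poly_sum poly_smult by (rule order.trans[OF sum_abs])
qed

lemma abs_poly_pderiv_lagrange_interp_le:
  fixes X :: "real set" and \<phi> :: "real \<Rightarrow> real" and M D x :: real
  assumes "finite X"
    and weight: "\<And>j. j \<in> X \<Longrightarrow> \<bar>\<phi> j\<bar> \<le> M * \<bar>\<Prod>k\<in>X-{j}. j - k\<bar>"
    and near: "\<And>k. k \<in> X \<Longrightarrow> \<bar>x - k\<bar> \<le> D"
  shows "\<bar>poly (pderiv (lagrange_interp X \<phi>)) x\<bar>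
           \<le> card X * (M * ((card X - 1) * D ^ (card X - 2)))"
proof -
  have "\<bar>\<Sum>i\<in>X-{j}. \<Prod>k\<in>X-{j}-{i}. x - k\<bar> \<le> (card X - 1) * D ^ (card X - 2)"
    if "j \<in> X" for j
  proof -
    have "\<bar>\<Prod>k\<in>X-{j}-{i}. x - k\<bar> \<le> D ^ (card X - 2)" if "i \<in> X - {j}" for i
      using abs_prod_le_power[of "X-{j}-{i}" "\<lambda>k. x - k" D] near assms(1) \<open>j \<in> X\<close> that
      by (simp add: card_Diff_singleton_if numeral_2_eq_2)
    then have "(\<Sum>i\<in>X-{j}. \<bar>\<Prod>k\<in>X-{j}-{i}. x - k\<bar>) \<le> (card X - 1) * D ^ (card X - 2)"
      using sum_mono[of "X-{j}" _ "\<lambda>_. D ^ (card X - 2)"] assms(1) that by simp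
    then show ?thesis
      by (rule order.trans[OF sum_abs])
  qed
  then have "\<bar>\<phi> j * poly (pderiv (lagrange_basis X j)) x\<bar>
      \<le> M * ((card X - 1) * D ^ (card X - 2))" if "j \<in> X" for j
    unfolding poly_pderiv_lagrange_basis using that weight prod_diff_nonzero[OF assms(1)]
    by (intro abs_mult_divide_le)
  then have sum_le: "(\<Sum>j\<in>X. \<bar>\<phi> j * poly (pderiv (lagrange_basis X j)) x\<bar>)
      \<le> card X * (M * ((card X - 1) * D ^ (card X - 2)))"
    using sum_mono[of X _ "\<lambda>_. M * ((card X - 1) * D ^ (card X - 2))"] by simp
  have "poly (pderiv (lagrange_interp X \<phi>)) x
      = (\<Sum>j\<in>X. \<phi> j * poly (pderiv (lagrange_basis X j)) x)"
    using higher_pderiv_sum[of 1 "\<lambda>j. smult (\<phi> j) (lagrange_basis X j)" X]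
    by (simp add: lagrange_interp_def poly_sum pderiv_smult)
  then show ?thesis
    using order.trans[OF sum_abs sum_le] by simp
qed

section \<open>Well-separated nodes\<close>

definition well_separated :: "real \<Rightarrow> real set \<Rightarrow> bool" where
  "well_separated a X \<longleftrightarrow> (\<forall>j\<in>X-{a}. \<forall>k\<in>X-{j}. \<bar>j - a\<bar> \<le> 2 * \<bar>j - k\<bar>)"

lemma well_separated_weight:
  fixes R :: "real \<Rightarrow> real"
  assumes "finite X" "card X = m + 1" "well_separated a X" "j \<in> X"
    and "R a = 0" "\<bar>R j\<bar> \<le> e * \<bar>j - a\<bar> ^ m" "0 \<le> e"
  shows "\<bar>R j\<bar> \<le> e * 2 ^ m * \<bar>\<Prod>k\<in>X-{j}. j - k\<bar>"
proof (cases "j = a")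
  case True
  then show ?thesis
    using assms(5,7) by simp
next
  case False
  have sep: "\<bar>j - a\<bar> \<le> 2 * \<bar>j - k\<bar>" if "k \<in> X - {j}" for k
    using assms(3,4) False that unfolding well_separated_def by blast
  have "(\<bar>j - a\<bar> / 2) ^ m = (\<Prod>k\<in>X-{j}. \<bar>j - a\<bar> / 2)"
    using assms(1,2,4) by simp
  also have "\<dots> \<le> (\<Prod>k\<in>X-{j}. \<bar>j - k\<bar>)"
    by (intro prod_mono) (use sep in fastforce)
  also have "\<dots> = \<bar>\<Prod>k\<in>X-{j}. j - k\<bar>"
    by (simp add: abs_prod)
  finally have "\<bar>j - a\<bar> ^ m \<le> 2 ^ m * \<bar>\<Prod>k\<in>X-{j}. j - k\<bar>"
    by (simp add: power_divide field_simps)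
  then have "e * \<bar>j - a\<bar> ^ m \<le> e * (2 ^ m * \<bar>\<Prod>k\<in>X-{j}. j - k\<bar>)"
    using assms(7) by (rule mult_left_mono)
  then show ?thesis
    using assms(6) by simp
qed

text \<open>\<open>m + 1\<close> Lagrange terms, each with a factor \<open>2^m\<close> from the separation and \<open>(2(b - a))^m\<close>
  from the distance of \<open>x \<in> [a, b]\<close> to the nodes; the factor \<open>m\<close> accounts for the derivative.\<close>

definition lagrange_const :: "nat \<Rightarrow> real" where
  "lagrange_const m = (real m + 1) * real m * 4 ^ m"

lemma lagrange_interp_remainder_bounds:
  fixes X :: "real set" and R :: "real \<Rightarrow> real"
  assumes "0 < m" "finite X" "card X = m + 1" "X \<subseteq> {a - (b - a)..b}" "well_separated a X"
    and "R a = 0" "\<And>j. j \<in> X \<Longrightarrow> \<bar>R j\<bar> \<le> e * \<bar>j - a\<bar> ^ m" "0 \<le> e"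
    and "x \<in> {a..b}"
  shows "\<bar>poly (lagrange_interp X R) x\<bar> \<le> lagrange_const m * e * (b - a) ^ m"
    and "\<bar>poly (pderiv (lagrange_interp X R)) x\<bar> \<le> lagrange_const m * e * (b - a) ^ (m - 1)"
proof -
  define L where "L = b - a"
  have "0 \<le> L"
    using assms(9) by (simp add: L_def)
  have near: "\<bar>x - k\<bar> \<le> 2 * L" if "k \<in> X" for k
    using assms(4,9) that by (auto simp: L_def abs_le_iff)
  have weight: "\<bar>R j\<bar> \<le> e * 2 ^ m * \<bar>\<Prod>k\<in>X-{j}. j - k\<bar>" if "j \<in> X" for j
    by (rule well_separated_weight[OF assms(2,3,5) that assms(6) assms(7)[OF that] assms(8)])
  have card: "real (card X) = real m + 1" "card X - 1 = m" "card X - 2 = m - 1"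
    using assms(3) by auto
  have four: "(2::real) ^ m * 2 ^ m = 4 ^ m"
    by (simp flip: power_mult_distrib)
  have "\<bar>poly (lagrange_interp X R) x\<bar> \<le> (real m + 1) * (e * 2 ^ m * (2 * L) ^ m)"
    using abs_poly_lagrange_interp_le[OF assms(2) weight near] by (simp only: card)
  also have "\<dots> = ((real m + 1) * 4 ^ m) * (e * L ^ m)"
    unfolding power_mult_distrib four[symmetric] by (simp add: mult_ac)
  also have "\<dots> \<le> lagrange_const m * (e * L ^ m)"
    using assms(1,8) \<open>0 \<le> L\<close> by (intro mult_right_mono) (auto simp: lagrange_const_def)
  finally show "\<bar>poly (lagrange_interp X R) x\<bar> \<le> lagrange_const m * e * (b - a) ^ m"
    by (simp add: L_def mult_ac)
  have "(2::real) ^ (m - 1) \<le> 2 ^ m"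
    by (rule power_increasing) auto
  then have two: "(2::real) ^ m * 2 ^ (m - 1) \<le> 4 ^ m"
    by (simp flip: four)
  have "\<bar>poly (pderiv (lagrange_interp X R)) x\<bar>
      \<le> (real m + 1) * (e * 2 ^ m * (real m * (2 * L) ^ (m - 1)))"
    using abs_poly_pderiv_lagrange_interp_le[OF assms(2) weight near] by (simp only: card)
  also have "\<dots> = ((real m + 1) * real m) * (2 ^ m * 2 ^ (m - 1)) * (e * L ^ (m - 1))"
    unfolding power_mult_distrib by (simp add: mult_ac)
  also have "\<dots> \<le> ((real m + 1) * real m) * 4 ^ m * (e * L ^ (m - 1))"
    using two assms(8) \<open>0 \<le> L\<close> by (intro mult_right_mono mult_left_mono) auto
  finally show "\<bar>poly (pderiv (lagrange_interp X R)) x\<bar> \<le> lagrange_const m * e * (b - a) ^ (m - 1)"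
    by (simp add: L_def lagrange_const_def mult_ac)
qed

section \<open>Taylor polynomials\<close>

definition taylor_poly :: "nat \<Rightarrow> real \<Rightarrow> (real \<Rightarrow> real) \<Rightarrow> real poly" where
  "taylor_poly m a \<phi> = (\<Sum>k\<le>m. smult ((deriv ^^ k) \<phi> a / fact k) ([:-a, 1:] ^ k))"

lemma poly_taylor_poly: "poly (taylor_poly m a \<phi>) = taylorT m a \<phi>"
  by (rule ext) (simp add: taylor_poly_def taylorT_def poly_sum)

lemma degree_taylor_poly: "degree (taylor_poly m a \<phi>) \<le> m"
  unfolding taylor_poly_def
proof (intro degree_sum_le)
  fix k
  assume "k \<in> {..m}"
  have "degree (smult ((deriv ^^ k) \<phi> a / fact k) ([:-a, 1:] ^ k)) \<le> degree ([:-a, 1:] ^ k)"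
    by (rule degree_smult_le)
  also have "\<dots> \<le> degree [:-a, 1:] * k"
    by (rule degree_power_le)
  finally show "degree (smult ((deriv ^^ k) \<phi> a / fact k) ([:-a, 1:] ^ k)) \<le> m"
    using \<open>k \<in> {..m}\<close> by simp
qed auto

lemma taylorT_self: "taylorT m a \<phi> a = \<phi> a"
proof -
  have "taylorT m a \<phi> a = (\<Sum>k\<le>m. if k = 0 then \<phi> a else 0)"
    unfolding taylorT_def by (intro sum.cong) auto
  then show ?thesis
    by simp
qed

lemma taylorT_remainder_mean_value:
  assumes "Cm m \<phi>" "0 < m"
  obtains t where "\<bar>t - a\<bar> \<le> \<bar>x - a\<bar>"
    and "\<phi> x - taylorT m a \<phi> x = ((deriv ^^ m) \<phi> t - (deriv ^^ m) \<phi> a) / fact m * (x - a) ^ m"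
proof (cases "x = a")
  case True
  then show ?thesis
    using that[of a] assms(2) by (simp add: taylorT_self)
next
  case False
  have "\<forall>k t. k < m \<and> min a x \<le> t \<and> t \<le> max a x \<longrightarrow>
      DERIV ((deriv ^^ k) \<phi>) t :> (deriv ^^ Suc k) \<phi> t"
    using assms(1) by (auto simp: Cm_def DERIV_deriv_iff_real_differentiable)
  then obtain t where t: "if x < a then x < t \<and> t < a else a < t \<and> t < x"
    and \<phi>x: "\<phi> x = (\<Sum>k<m. (deriv ^^ k) \<phi> a / fact k * (x - a) ^ k)
                  + (deriv ^^ m) \<phi> t / fact m * (x - a) ^ m"
    using Taylor[of m "\<lambda>k. (deriv ^^ k) \<phi>" \<phi> "min a x" "max a x" a x] assms(2) False by auto
  have "taylorT m a \<phi> x = (\<Sum>k<m. (deriv ^^ k) \<phi> a / fact k * (x - a) ^ k)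
                          + (deriv ^^ m) \<phi> a / fact m * (x - a) ^ m"
    by (simp add: taylorT_def flip: lessThan_Suc_atMost)
  then show ?thesis
    using that[of t] t \<phi>x by (auto simp: diff_divide_distrib left_diff_distrib split: if_splits)
qed

lemma taylorT_remainder_uniform:
  assumes "Cm m \<phi>" "0 < m" "bounded K" "0 < e"
  shows "\<exists>\<rho>>0. \<forall>a\<in>K. \<forall>x. \<bar>x - a\<bar> < \<rho> \<longrightarrow> \<bar>\<phi> x - taylorT m a \<phi> x\<bar> \<le> e * \<bar>x - a\<bar> ^ m"
proof -
  obtain B where B: "\<And>x. x \<in> K \<Longrightarrow> \<bar>x\<bar> \<le> B"
    using assms(3) by (auto simp: bounded_pos)
  define S where "S = {-(B + 1)..B + 1}"
  have "uniformly_continuous_on S ((deriv ^^ m) \<phi>)"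
    using assms(1) unfolding S_def Cm_def
    by (intro compact_uniformly_continuous) (auto intro: continuous_on_subset)
  moreover have "0 < e * fact m"
    using assms(4) by simp
  ultimately obtain d where "0 < d" and d: "\<And>u v. u \<in> S \<Longrightarrow> v \<in> S \<Longrightarrow> dist v u < d \<Longrightarrow>
      dist ((deriv ^^ m) \<phi> v) ((deriv ^^ m) \<phi> u) < e * fact m"
    unfolding uniformly_continuous_on_def by blast
  show ?thesis
  proof (intro exI[of _ "min d 1"] conjI ballI allI impI)
    fix a x
    assume "a \<in> K" and x: "\<bar>x - a\<bar> < min d 1"
    obtain t where t: "\<bar>t - a\<bar> \<le> \<bar>x - a\<bar>" and eq: "\<phi> x - taylorT m a \<phi> x
        = ((deriv ^^ m) \<phi> t - (deriv ^^ m) \<phi> a) / fact m * (x - a) ^ m"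
      using taylorT_remainder_mean_value[OF assms(1,2)] by blast
    have "a \<in> S" "t \<in> S"
      using B[OF \<open>a \<in> K\<close>] t x by (auto simp: S_def)
    then have "\<bar>(deriv ^^ m) \<phi> t - (deriv ^^ m) \<phi> a\<bar> / fact m \<le> e"
      using d[of a t] t x by (simp add: dist_real_def pos_divide_le_eq)
    then show "\<bar>\<phi> x - taylorT m a \<phi> x\<bar> \<le> e * \<bar>x - a\<bar> ^ m"
      unfolding eq abs_mult abs_divide power_abs by (intro mult_right_mono) auto
  qed (use \<open>0 < d\<close> in simp)
qed

section \<open>Area and variation of polynomial arcs\<close>

definition poly_area :: "real poly \<Rightarrow> real poly \<Rightarrow> real \<Rightarrow> real \<Rightarrow> real" where
  "poly_area P Q a b =
     integral {a..b} (\<lambda>x. poly (pderiv P) x * poly Q x - poly (pderiv Q) x * poly P x)"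

definition poly_variation :: "real poly \<Rightarrow> real \<Rightarrow> real \<Rightarrow> real" where
  "poly_variation P a b = integral {a..b} (\<lambda>x. \<bar>poly (pderiv P) x\<bar>)"

lemma deriv_poly_real: "deriv (poly p) x = poly (pderiv p) x"
  for p :: "real poly"
  by (rule DERIV_imp_deriv) (rule poly_DERIV)

lemma integrable_abs_poly_pderiv: "(\<lambda>x. \<bar>poly (pderiv P) x\<bar>) integrable_on {a..b}"
  for P :: "real poly"
  by (intro integrable_continuous_real continuous_intros)

lemma AVA_eq_poly_area:
  "AVA m f g h a b = h b - h a - 2 * poly_area (taylor_poly m a f) (taylor_poly m a g) a b
     + 2 * f a * (g b - taylorT m a g b) - 2 * g a * (f b - taylorT m a f b)"
  by (simp add: AVA_def poly_area_def deriv_poly_real flip: poly_taylor_poly)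

lemma AVV_eq_poly_variation:
  "AVV m f g a b = (b - a) ^ (2 * m) + (b - a) ^ m *
     (poly_variation (taylor_poly m a f) a b + poly_variation (taylor_poly m a g) a b)"
  by (simp add: AVV_def poly_variation_def deriv_poly_real integral_add integrable_abs_poly_pderiv
      flip: poly_taylor_poly)

lemma dA_eq_poly_area:
  "dA m X f g h a b = h b - h a - 2 * poly_area (interp m X f) (interp m X g) a b"
  by (simp add: dA_def poly_area_def)

lemma dV_eq_poly_variation:
  "dV m X f g a b = diameter X ^ (2 * m) + diameter X ^ m *
     (poly_variation (interp m X f) a b + poly_variation (interp m X g) a b)"
  by (simp add: dV_def poly_variation_def integral_add integrable_abs_poly_pderiv)

lemma poly_variation_nonneg: "0 \<le> poly_variation P a b"
  unfolding poly_variation_def by (intro integral_nonneg integrable_abs_poly_pderiv) auto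

lemma has_integral_poly_pderiv:
  fixes p :: "real poly"
  assumes "a \<le> b"
  shows "((\<lambda>x. poly (pderiv p) x) has_integral (poly p b - poly p a)) {a..b}"
  by (rule fundamental_theorem_of_calculus[OF assms])
    (auto intro: has_field_derivative_at_within
      simp flip: has_real_derivative_iff_has_vector_derivative)

lemma abs_poly_diff_le_poly_variation:
  fixes P :: "real poly"
  assumes "a \<le> x" "x \<le> b"
  shows "\<bar>poly P x - poly P a\<bar> \<le> poly_variation P a b"
proof -
  have "poly P x - poly P a = integral {a..x} (\<lambda>t. poly (pderiv P) t)"
    using has_integral_poly_pderiv[OF assms(1), of P] by (rule integral_unique[symmetric])
  also have "\<bar>\<dots>\<bar> \<le> integral {a..x} (\<lambda>t. \<bar>poly (pderiv P) t\<bar>)"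
    using integral_norm_bound_integral[of "\<lambda>t. poly (pderiv P) t" "{a..x}"]
    by (simp add: integrable_abs_poly_pderiv integrable_continuous_real continuous_intros)
  also have "\<dots> \<le> poly_variation P a b"
    unfolding poly_variation_def using assms
    by (intro integral_subset_le integrable_abs_poly_pderiv) auto
  finally show ?thesis .
qed

lemma poly_variation_add_le:
  fixes P Q :: "real poly"
  assumes "a \<le> b" "\<And>x. x \<in> {a..b} \<Longrightarrow> \<bar>poly (pderiv Q) x\<bar> \<le> r"
  shows "poly_variation (P + Q) a b \<le> poly_variation P a b + (b - a) * r"
proof -
  have "((\<lambda>x. \<bar>poly (pderiv P) x\<bar> + r) has_integral (poly_variation P a b + (b - a) * r)) {a..b}"
    unfolding poly_variation_def using assms(1) has_integral_const_real[of r a b]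
    by (intro has_integral_add integrable_integral integrable_abs_poly_pderiv) (auto simp: mult.commute)
  moreover have "\<bar>poly (pderiv (P + Q)) x\<bar> \<le> \<bar>poly (pderiv P) x\<bar> + r" if "x \<in> {a..b}" for x
    using assms(2)[OF that] abs_triangle_ineq[of "poly (pderiv P) x" "poly (pderiv Q) x"]
    by (simp add: pderiv_add)
  ultimately show ?thesis
    unfolding poly_variation_def by (intro has_integral_le[OF integrable_integral] integrable_abs_poly_pderiv)
qed

text \<open>Splitting off \<open>T2(a) U1' - T1(a) U2'\<close>, which integrates exactly, leaves an integrand
  in which every term carries a factor \<open>U1\<close>, \<open>U2\<close> or one of their derivatives.\<close>

lemma poly_area_add_eq:
  fixes T1 T2 U1 U2 :: "real poly"
  assumes "a \<le> b" "poly U1 a = 0" "poly U2 a = 0"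
  shows "poly_area (T1 + U1) (T2 + U2) a b - poly_area T1 T2 a b
           - (poly T2 a * poly U1 b - poly T1 a * poly U2 b)
         = integral {a..b} (\<lambda>x. poly (pderiv T1) x * poly U2 x - poly (pderiv T2) x * poly U1 x
             + poly (pderiv U1) x * (poly T2 x - poly T2 a) - poly (pderiv U2) x * (poly T1 x - poly T1 a)
             + poly (pderiv U1) x * poly U2 x - poly (pderiv U2) x * poly U1 x)"
    (is "_ = integral _ ?W")
proof -
  have boundary: "((\<lambda>x. poly T2 a * poly (pderiv U1) x - poly T1 a * poly (pderiv U2) x) has_integral
      (poly T2 a * poly U1 b - poly T1 a * poly U2 b)) {a..b}"
    using has_integral_diff[OF has_integral_mult_right[OF has_integral_poly_pderiv[OF assms(1), of U1]]
        has_integral_mult_right[OF has_integral_poly_pderiv[OF assms(1), of U2]]] assms(2,3)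
    by simp
  have "poly_area (T1 + U1) (T2 + U2) a b - poly_area T1 T2 a b
      = integral {a..b} (\<lambda>x. poly (pderiv (T1 + U1)) x * poly (T2 + U2) x
            - poly (pderiv (T2 + U2)) x * poly (T1 + U1) x
          - (poly (pderiv T1) x * poly T2 x - poly (pderiv T2) x * poly T1 x))"
    unfolding poly_area_def
    by (intro integral_diff[symmetric] integrable_continuous_real continuous_intros)
  also have "\<dots> = integral {a..b} (\<lambda>x. ?W x
      + (poly T2 a * poly (pderiv U1) x - poly T1 a * poly (pderiv U2) x))"
    by (simp add: pderiv_add algebra_simps)
  also have "\<dots> = integral {a..b} ?W + (poly T2 a * poly U1 b - poly T1 a * poly U2 b)"
    using boundary
    by (subst integral_add) (auto intro!: integrable_continuous_real continuous_intros
        simp: has_integral_integrable integral_unique)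
  finally show ?thesis
    by simp
qed

lemma poly_area_perturbation:
  fixes T1 T2 U1 U2 :: "real poly"
  assumes "a \<le> b" "(b - a) * r \<le> s"
    and U: "\<And>x. x \<in> {a..b} \<Longrightarrow> \<bar>poly U1 x\<bar> \<le> s \<and> \<bar>poly U2 x\<bar> \<le> s
              \<and> \<bar>poly (pderiv U1) x\<bar> \<le> r \<and> \<bar>poly (pderiv U2) x\<bar> \<le> r"
    and "poly U1 a = 0" "poly U2 a = 0"
  shows "\<bar>poly_area (T1 + U1) (T2 + U2) a b - poly_area T1 T2 a b
            - (poly T2 a * poly U1 b - poly T1 a * poly U2 b)\<bar>
         \<le> 2 * s * (poly_variation T1 a b + poly_variation T2 a b) + 2 * s\<^sup>2"
proof -
  define S1 S2 where "S1 = poly_variation T1 a b" and "S2 = poly_variation T2 a b"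
  define W where "W x = poly (pderiv T1) x * poly U2 x - poly (pderiv T2) x * poly U1 x
      + poly (pderiv U1) x * (poly T2 x - poly T2 a) - poly (pderiv U2) x * (poly T1 x - poly T1 a)
      + poly (pderiv U1) x * poly U2 x - poly (pderiv U2) x * poly U1 x" for x
  have "0 \<le> s" "0 \<le> r"
    using U[of a] assms(1) by auto
  have "S1 \<ge> 0" "S2 \<ge> 0"
    by (simp_all add: S1_def S2_def poly_variation_nonneg)
  have W_le: "\<bar>W x\<bar> \<le> (\<bar>poly (pderiv T1) x\<bar> + \<bar>poly (pderiv T2) x\<bar>) * s + (r * (S1 + S2) + 2 * r * s)"
    if x: "x \<in> {a..b}" for x
  proof -
    have "\<bar>poly T1 x - poly T1 a\<bar> \<le> S1" "\<bar>poly T2 x - poly T2 a\<bar> \<le> S2"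
      using x by (auto simp: S1_def S2_def intro: abs_poly_diff_le_poly_variation)
    then have "\<bar>W x\<bar> \<le> \<bar>poly (pderiv T1) x\<bar> * s + \<bar>poly (pderiv T2) x\<bar> * s + r * S2 + r * S1 + r * s + r * s"
      unfolding W_def using U[OF x] \<open>0 \<le> r\<close>
      by (intro order.trans[OF abs_triangle_ineq4] order.trans[OF abs_triangle_ineq] add_mono;
          simp only: abs_mult; intro mult_mono; simp)
    then show ?thesis
      by (simp add: algebra_simps)
  qed
  have bound: "((\<lambda>x. (\<bar>poly (pderiv T1) x\<bar> + \<bar>poly (pderiv T2) x\<bar>) * s + (r * (S1 + S2) + 2 * r * s))
      has_integral ((S1 + S2) * s + (b - a) * (r * (S1 + S2) + 2 * r * s))) {a..b}"
    unfolding S1_def S2_def poly_variation_def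
    using assms(1) has_integral_const_real[of "r * (S1 + S2) + 2 * r * s" a b]
    by (intro has_integral_add has_integral_mult_left integrable_integral integrable_abs_poly_pderiv)
      (auto simp: S1_def S2_def poly_variation_def mult.commute)
  have "W integrable_on {a..b}"
    unfolding W_def by (intro integrable_continuous_real continuous_intros)
  then have "norm (integral {a..b} W) \<le> integral {a..b} (\<lambda>x. (\<bar>poly (pderiv T1) x\<bar>
      + \<bar>poly (pderiv T2) x\<bar>) * s + (r * (S1 + S2) + 2 * r * s))"
    by (rule integral_norm_bound_integral[OF _ has_integral_integrable[OF bound]]) (simp add: W_le)
  then have "\<bar>integral {a..b} W\<bar> \<le> (S1 + S2) * s + (b - a) * (r * (S1 + S2) + 2 * r * s)"
    using integral_unique[OF bound] by simp
  also have "\<dots> = (S1 + S2) * s + ((b - a) * r) * (S1 + S2) + 2 * ((b - a) * r) * s"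
    by (simp add: algebra_simps)
  also have "\<dots> \<le> (S1 + S2) * s + s * (S1 + S2) + 2 * s * s"
    using assms(2) \<open>0 \<le> s\<close> \<open>S1 \<ge> 0\<close> \<open>S2 \<ge> 0\<close>
    by (intro add_mono mult_right_mono mult_left_mono) auto
  finally show ?thesis
    unfolding poly_area_add_eq[OF assms(1,4,5)] W_def[abs_def]
    by (simp add: S1_def S2_def power2_eq_square algebra_simps)
qed

lemma AVV_pos:
  assumes "a < b"
  shows "0 < AVV m f g a b"
  using assms by (simp add: AVV_eq_poly_variation add_pos_nonneg poly_variation_nonneg)

section \<open>Comparing the two quotients on well-separated nodes\<close>

lemma area_defect_arith:
  fixes c e L S :: real
  assumes "0 \<le> c" "0 \<le> e" "e \<le> 1" "0 \<le> L" "0 \<le> S"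
  shows "4 * (c * e * L ^ m * S) + 4 * (c * e * L ^ m)\<^sup>2
           \<le> e * (4 * c * (1 + c)) * (L ^ (2 * m) + L ^ m * S)"
proof -
  define V where "V = L ^ (2 * m) + L ^ m * S"
  have "c * e * L ^ m * S = (c * e) * (L ^ m * S)"
    by (simp add: mult_ac)
  also have "\<dots> \<le> (c * e) * V"
    using assms by (intro mult_left_mono) (auto simp: V_def)
  finally have first: "c * e * L ^ m * S \<le> c * e * V" .
  have "(c * e * L ^ m)\<^sup>2 = c\<^sup>2 * (e * e) * L ^ (2 * m)"
    unfolding mult_2 power_add by (simp add: power2_eq_square ac_simps)
  also have "\<dots> \<le> c\<^sup>2 * e * V"
    using assms by (intro mult_mono mult_left_mono) (auto simp: V_def mult_left_le)
  finally have second: "(c * e * L ^ m)\<^sup>2 \<le> c\<^sup>2 * e * V" .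
  have "e * (4 * c * (1 + c)) * V = 4 * (c * e * V) + 4 * (c\<^sup>2 * e * V)"
    by (simp add: power2_eq_square algebra_simps)
  with first second show ?thesis
    unfolding V_def by linarith
qed

lemma dV_bound_arith:
  fixes d L S S' s c :: real
  assumes "0 \<le> d" "d \<le> 2 * L" "0 \<le> S" "0 \<le> S'" "S' \<le> S + 2 * s" "s \<le> c * L ^ m" "0 \<le> c"
  shows "d ^ (2 * m) + d ^ m * S' \<le> (4 ^ m + 2 ^ (m + 1) * c) * (L ^ (2 * m) + L ^ m * S)"
proof -
  have "0 \<le> L"
    using assms(1,2) by simp
  have "d ^ (2 * m) \<le> (2 * L) ^ (2 * m)"
    using assms(1,2) by (intro power_mono) auto
  also have "\<dots> = 4 ^ m * L ^ (2 * m)"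
    by (simp add: power_mult power_mult_distrib)
  finally have d2m: "d ^ (2 * m) \<le> 4 ^ m * L ^ (2 * m)" .
  have "d ^ m * S' \<le> (2 * L) ^ m * (S + 2 * s)"
    using assms \<open>0 \<le> L\<close> by (intro mult_mono power_mono) auto
  also have "\<dots> = 2 ^ m * (L ^ m * S) + 2 ^ (m + 1) * (L ^ m * s)"
    by (simp add: power_mult_distrib algebra_simps)
  also have "\<dots> \<le> 4 ^ m * (L ^ m * S) + 2 ^ (m + 1) * (c * L ^ (2 * m))"
  proof (intro add_mono mult_right_mono mult_left_mono)
    show "(2::real) ^ m \<le> 4 ^ m"
      by (rule power_mono) auto
    have "L ^ m * s \<le> L ^ m * (c * L ^ m)"
      using assms(6) \<open>0 \<le> L\<close> by (intro mult_left_mono) auto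
    then show "L ^ m * s \<le> c * L ^ (2 * m)"
      by (simp only: mult_2 power_add) (simp add: ac_simps)
  qed (use assms(3) \<open>0 \<le> L\<close> in auto)
  finally have dmS: "d ^ m * S' \<le> 4 ^ m * (L ^ m * S) + 2 ^ (m + 1) * (c * L ^ (2 * m))" .
  have "0 \<le> 2 ^ (m + 1) * c * (L ^ m * S)"
    using assms(3,7) \<open>0 \<le> L\<close> by simp
  moreover have "(4 ^ m + 2 ^ (m + 1) * c) * (L ^ (2 * m) + L ^ m * S)
      = 4 ^ m * L ^ (2 * m) + 4 ^ m * (L ^ m * S) + 2 ^ (m + 1) * (c * L ^ (2 * m))
        + 2 ^ (m + 1) * c * (L ^ m * S)"
    by (simp add: algebra_simps)
  ultimately show ?thesis
    using d2m dmS by linarith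
qed

lemma abs_divide_le_of_approx:
  fixes A D V W :: real
  assumes "0 < V" "0 < W" "\<bar>D / W\<bar> < \<epsilon>" "W \<le> C * V" "\<bar>A - D\<bar> \<le> E * V"
  shows "\<bar>A / V\<bar> \<le> \<epsilon> * C + E"
proof -
  have "0 \<le> \<epsilon>"
    using assms(3) by linarith
  have "\<bar>A\<bar> \<le> \<bar>D\<bar> + \<bar>A - D\<bar>"
    using abs_triangle_ineq[of D "A - D"] by simp
  also have "\<bar>D\<bar> \<le> \<epsilon> * W"
    using assms(2,3) by (simp add: abs_divide pos_divide_less_eq)
  also have "\<epsilon> * W \<le> \<epsilon> * (C * V)"
    using assms(4) \<open>0 \<le> \<epsilon>\<close> by (rule mult_left_mono)
  finally have "\<bar>A\<bar> \<le> (\<epsilon> * C + E) * V"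
    using assms(5) by (simp add: algebra_simps)
  then show ?thesis
    using assms(1) by (simp add: abs_divide pos_divide_le_eq)
qed

locale taylor_nodes =
  fixes m :: nat and a b e :: real and X :: "real set" and f g :: "real \<Rightarrow> real"
  assumes m_pos: "0 < m" and a_less_b: "a < b"
    and finite_X: "finite X" and card_X: "card X = m + 1" and a_in_X: "a \<in> X" and b_in_X: "b \<in> X"
    and X_subset: "X \<subseteq> {a - (b - a)..b}" and separated: "well_separated a X"
    and remainder_f: "\<And>j. j \<in> X \<Longrightarrow> \<bar>f j - taylorT m a f j\<bar> \<le> e * \<bar>j - a\<bar> ^ m"
    and remainder_g: "\<And>j. j \<in> X \<Longrightarrow> \<bar>g j - taylorT m a g j\<bar> \<le> e * \<bar>j - a\<bar> ^ m"
    and e_nonneg: "0 \<le> e" and e_le_1: "e \<le> 1"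
begin

lemma diameter_bounds: "b - a \<le> diameter X" "diameter X \<le> 2 * (b - a)"
proof -
  have "bounded X"
    using X_subset bounded_closed_interval bounded_subset by blast
  have "b - a \<le> dist b a"
    by (simp add: dist_real_def)
  also have "\<dots> \<le> diameter X"
    by (rule diameter_bounded_bound[OF \<open>bounded X\<close> b_in_X a_in_X])
  finally show "b - a \<le> diameter X" .
  show "diameter X \<le> 2 * (b - a)"
  proof (rule diameter_le)
    fix x y
    assume "x \<in> X" "y \<in> X"
    then have "x \<in> {a - (b - a)..b}" "y \<in> {a - (b - a)..b}"
      using X_subset by auto
    then show "norm (x - y) \<le> 2 * (b - a)"
      by (auto simp: abs_le_iff)
  qed (use a_in_X in auto)
qed

lemma interp_minus_taylor_poly:
  fixes \<phi> :: "real \<Rightarrow> real"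
  assumes "\<And>j. j \<in> X \<Longrightarrow> \<bar>\<phi> j - taylorT m a \<phi> j\<bar> \<le> e * \<bar>j - a\<bar> ^ m"
  defines "U \<equiv> interp m X \<phi> - taylor_poly m a \<phi>"
  shows "poly U a = 0" "poly U b = \<phi> b - taylorT m a \<phi> b"
    and "x \<in> {a..b} \<Longrightarrow> \<bar>poly U x\<bar> \<le> lagrange_const m * e * (b - a) ^ m
           \<and> \<bar>poly (pderiv U) x\<bar> \<le> lagrange_const m * e * (b - a) ^ (m - 1)"
proof -
  define R where "R = (\<lambda>x. \<phi> x - taylorT m a \<phi> x)"
  have "R a = 0"
    by (simp add: R_def taylorT_self)
  have R_le: "\<bar>R j\<bar> \<le> e * \<bar>j - a\<bar> ^ m" if "j \<in> X" for j
    using assms(1)[OF that] by (simp add: R_def)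
  have "interp m X \<phi> = taylor_poly m a \<phi>
      + lagrange_interp X (\<lambda>x. \<phi> x - poly (taylor_poly m a \<phi>) x)"
    by (rule interp_eq_add_lagrange_interp[OF finite_X card_X degree_taylor_poly])
  then have U: "U = lagrange_interp X R"
    by (simp add: U_def R_def poly_taylor_poly)
  show "poly U a = 0" "poly U b = \<phi> b - taylorT m a \<phi> b"
    using finite_X a_in_X b_in_X \<open>R a = 0\<close> by (simp_all add: U poly_lagrange_interp R_def)
  show "\<bar>poly U x\<bar> \<le> lagrange_const m * e * (b - a) ^ m
      \<and> \<bar>poly (pderiv U) x\<bar> \<le> lagrange_const m * e * (b - a) ^ (m - 1)" if "x \<in> {a..b}"
    unfolding U using lagrange_interp_remainder_bounds[OF m_pos finite_X card_X X_subset separated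
        \<open>R a = 0\<close> R_le e_nonneg that] by blast
qed

definition value_bound :: real where
  "value_bound = lagrange_const m * e * (b - a) ^ m"

definition slope_bound :: real where
  "slope_bound = lagrange_const m * e * (b - a) ^ (m - 1)"

definition Uf :: "real poly" where
  "Uf = interp m X f - taylor_poly m a f"

definition Ug :: "real poly" where
  "Ug = interp m X g - taylor_poly m a g"

lemma slope_bound_mult: "(b - a) * slope_bound = value_bound"
  unfolding value_bound_def slope_bound_def using m_pos by (cases m) (simp_all add: mult_ac)

lemma value_bound_le: "value_bound \<le> lagrange_const m * (b - a) ^ m"
  using mult_left_mono[OF e_le_1, of "lagrange_const m * (b - a) ^ m"] a_less_b
  by (simp add: value_bound_def lagrange_const_def mult_ac)

lemma Uf_boundary: "poly Uf a = 0" "poly Uf b = f b - taylorT m a f b"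
  using interp_minus_taylor_poly(1,2)[where \<phi> = f] remainder_f unfolding Uf_def by blast+

lemma Ug_boundary: "poly Ug a = 0" "poly Ug b = g b - taylorT m a g b"
  using interp_minus_taylor_poly(1,2)[where \<phi> = g] remainder_g unfolding Ug_def by blast+

lemma perturbation_bounds:
  assumes "x \<in> {a..b}"
  shows "\<bar>poly Uf x\<bar> \<le> value_bound \<and> \<bar>poly Ug x\<bar> \<le> value_bound
    \<and> \<bar>poly (pderiv Uf) x\<bar> \<le> slope_bound \<and> \<bar>poly (pderiv Ug) x\<bar> \<le> slope_bound"
  using interp_minus_taylor_poly(3)[where \<phi> = f] interp_minus_taylor_poly(3)[where \<phi> = g]
    remainder_f remainder_g assms
  unfolding Uf_def Ug_def value_bound_def slope_bound_def by blast

lemma AVA_minus_dA_le: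
  "\<bar>AVA m f g h a b - dA m X f g h a b\<bar>
     \<le> e * (4 * lagrange_const m * (1 + lagrange_const m)) * AVV m f g a b"
proof -
  define T1 T2 where "T1 = taylor_poly m a f" and "T2 = taylor_poly m a g"
  define S where "S = poly_variation T1 a b + poly_variation T2 a b"
  have interp: "interp m X f = T1 + Uf" "interp m X g = T2 + Ug"
    by (simp_all add: Uf_def Ug_def T1_def T2_def)
  \<comment> \<open>The correction terms of \<open>A\<close> are exactly the boundary terms of the area perturbation.\<close>
  have "AVA m f g h a b - dA m X f g h a b = 2 * (poly_area (T1 + Uf) (T2 + Ug) a b
      - poly_area T1 T2 a b - (poly T2 a * poly Uf b - poly T1 a * poly Ug b))"
    unfolding AVA_eq_poly_area dA_eq_poly_area interp Uf_boundary(2) Ug_boundary(2)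
    by (simp add: T1_def T2_def poly_taylor_poly taylorT_self algebra_simps)
  also have "\<bar>\<dots>\<bar> \<le> 4 * (value_bound * S) + 4 * value_bound\<^sup>2"
    using poly_area_perturbation[of a b slope_bound value_bound Uf Ug T1 T2] a_less_b
      slope_bound_mult perturbation_bounds Uf_boundary(1) Ug_boundary(1)
    by (simp add: S_def)
  also have "\<dots> \<le> e * (4 * lagrange_const m * (1 + lagrange_const m)) * AVV m f g a b"
    unfolding value_bound_def AVV_eq_poly_variation S_def T1_def T2_def
    using e_nonneg e_le_1 a_less_b
    by (intro area_defect_arith) (auto simp: lagrange_const_def poly_variation_nonneg add_nonneg_nonneg)
  finally show ?thesis .
qed

lemma dV_le_AVV: "dV m X f g a b \<le> (4 ^ m + 2 ^ (m + 1) * lagrange_const m) * AVV m f g a b"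
proof -
  define T1 T2 where "T1 = taylor_poly m a f" and "T2 = taylor_poly m a g"
  have "poly_variation (T1 + Uf) a b \<le> poly_variation T1 a b + value_bound"
    "poly_variation (T2 + Ug) a b \<le> poly_variation T2 a b + value_bound"
    using poly_variation_add_le[of a b Uf slope_bound T1] poly_variation_add_le[of a b Ug slope_bound T2]
      perturbation_bounds a_less_b slope_bound_mult by auto
  moreover have "interp m X f = T1 + Uf" "interp m X g = T2 + Ug"
    by (simp_all add: Uf_def Ug_def T1_def T2_def)
  ultimately show ?thesis
    unfolding dV_eq_poly_variation AVV_eq_poly_variation T1_def T2_def
    using diameter_bounds a_less_b value_bound_le
    by (intro dV_bound_arith) (auto simp: lagrange_const_def poly_variation_nonneg add_nonneg_nonneg)
qed

lemma dV_pos: "0 < dV m X f g a b"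
  unfolding dV_eq_poly_variation using diameter_bounds(1) a_less_b
  by (intro add_pos_nonneg mult_nonneg_nonneg add_nonneg_nonneg poly_variation_nonneg) auto

lemma AVA_AVV_le:
  assumes "\<bar>dA m X f g h a b / dV m X f g a b\<bar> < \<epsilon>"
  shows "\<bar>AVA m f g h a b / AVV m f g a b\<bar>
    \<le> \<epsilon> * (4 ^ m + 2 ^ (m + 1) * lagrange_const m) + e * (4 * lagrange_const m * (1 + lagrange_const m))"
  using abs_divide_le_of_approx[OF AVV_pos[OF a_less_b] dV_pos assms dV_le_AVV AVA_minus_dA_le] .

end

section \<open>Choosing the nodes\<close>

lemma well_separated_insert:
  assumes "well_separated a (insert a Y)" "\<forall>z\<in>Y. \<bar>z - a\<bar> < \<bar>y - a\<bar> / 2"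
  shows "well_separated a (insert y (insert a Y))"
  unfolding well_separated_def
proof (intro ballI)
  fix j k
  assume j: "j \<in> insert y (insert a Y) - {a}" and k: "k \<in> insert y (insert a Y) - {j}"
  show "\<bar>j - a\<bar> \<le> 2 * \<bar>j - k\<bar>"
  proof (cases "k = a")
    case False
    then consider "j = y" "k \<in> Y" | "j \<in> Y" "k = y" | "j \<in> Y" "k \<in> Y"
      using j k by auto
    then show ?thesis
    proof cases
      case 1
      then have "\<bar>k - a\<bar> < \<bar>y - a\<bar> / 2"
        using assms(2) by blast
      with 1 show ?thesis
        by (simp add: abs_if split: if_splits)
    next
      case 2
      then have "\<bar>j - a\<bar> < \<bar>y - a\<bar> / 2"
        using assms(2) by blast
      with 2 show ?thesis
        by (simp add: abs_if split: if_splits)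
    next
      case 3
      then show ?thesis
        using assms(1) j k unfolding well_separated_def by auto
    qed
  qed simp
qed

lemma well_separated_nodes_near:
  fixes K :: "real set"
  assumes "n = 0 \<or> a islimpt K" "0 < r"
  shows "\<exists>Y\<subseteq>K. finite Y \<and> card Y = n \<and> a \<notin> Y \<and> (\<forall>y\<in>Y. \<bar>y - a\<bar> < r)
           \<and> well_separated a (insert a Y)"
  using assms
proof (induction n arbitrary: r)
  case 0
  then show ?case
    by (intro exI[of _ "{}"]) (simp add: well_separated_def)
next
  case (Suc n)
  then obtain y where y: "y \<in> K" "y \<noteq> a" "\<bar>y - a\<bar> < r"
    by (auto simp: islimpt_approachable_real)
  then have "0 < \<bar>y - a\<bar> / 2"
    by simp
  with Suc obtain Y where Y: "Y \<subseteq> K" "finite Y" "card Y = n" "a \<notin> Y"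
      "\<forall>z\<in>Y. \<bar>z - a\<bar> < \<bar>y - a\<bar> / 2" "well_separated a (insert a Y)"
    by blast
  have "y \<notin> Y"
    using Y(5) by force
  show ?case
  proof (intro exI[of _ "insert y Y"] conjI)
    show "\<forall>z\<in>insert y Y. \<bar>z - a\<bar> < r"
    proof
      fix z
      assume "z \<in> insert y Y"
      moreover have "\<bar>z - a\<bar> < \<bar>y - a\<bar>" if "z \<in> Y"
        using bspec[OF Y(5) that] by argo
      ultimately show "\<bar>z - a\<bar> < r"
        using y(3) by auto
    qed
    show "well_separated a (insert a (insert y Y))"
      using well_separated_insert[OF Y(6,5)] by (simp add: insert_commute)
  qed (use Y y \<open>y \<notin> Y\<close> in auto)
qed

lemma interpolation_nodes:
  fixes K :: "real set"
  assumes "a \<in> K" "b \<in> K" "a < b" "0 < m" "m = 1 \<or> a islimpt K"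
  obtains X where "X \<subseteq> K" "finite X" "card X = m + 1" "a \<in> X" "b \<in> X"
    "X \<subseteq> {a - (b - a)..b}" "well_separated a X"
proof -
  obtain Y where Y: "Y \<subseteq> K" "finite Y" "card Y = m - 1" "a \<notin> Y"
      "\<forall>y\<in>Y. \<bar>y - a\<bar> < \<bar>b - a\<bar> / 2" "well_separated a (insert a Y)"
    using well_separated_nodes_near[of "m - 1" a K "\<bar>b - a\<bar> / 2"] assms(3,5) by auto
  have "b \<notin> Y"
    using Y(5) by force
  show ?thesis
  proof (rule that[of "insert b (insert a Y)"])
    show "card (insert b (insert a Y)) = m + 1"
      using Y(2,3,4) \<open>b \<notin> Y\<close> assms(3,4) by simp
    have "a - (b - a) \<le> y \<and> y \<le> b" if "y \<in> Y" for y
      using bspec[OF Y(5) that] assms(3) by argo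
    then show "insert b (insert a Y) \<subseteq> {a - (b - a)..b}"
      using assms(3) by auto
    show "well_separated a (insert b (insert a Y))"
      using well_separated_insert[OF Y(6,5)] .
  qed (use Y assms in auto)
qed

lemma close_pairs_islimpt:
  fixes K :: "real set"
  assumes "finite {x. x isolated_in K}"
  shows "\<exists>\<delta>>0. \<forall>a\<in>K. \<forall>b\<in>K. a < b \<longrightarrow> b - a < \<delta> \<longrightarrow> a islimpt K"
proof -
  have "eventually (\<lambda>\<delta>. \<forall>y\<in>K. y \<noteq> x \<longrightarrow> \<delta> \<le> \<bar>y - x\<bar>) (at_right 0)"
    if iso: "x \<in> {x. x isolated_in K}" for x
  proof -
    obtain d where "0 < d" and d: "\<And>y. y \<in> K \<Longrightarrow> dist x y < d \<Longrightarrow> y = x"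
      using isolated_inE_dist[of x K] iso by blast
    have "\<forall>y\<in>K. y \<noteq> x \<longrightarrow> \<delta> \<le> \<bar>y - x\<bar>" if "\<delta> < d" for \<delta>
      using d that by (force simp: dist_real_def abs_minus_commute)
    then show ?thesis
      using \<open>0 < d\<close> by (auto simp: eventually_at_right_field)
  qed
  then have "eventually (\<lambda>\<delta>. \<forall>x\<in>{x. x isolated_in K}. \<forall>y\<in>K. y \<noteq> x \<longrightarrow> \<delta> \<le> \<bar>y - x\<bar>)
      (at_right 0)"
    by (intro eventually_ball_finite[OF assms] ballI)
  then have "eventually (\<lambda>\<delta>. 0 < \<delta> \<and> (\<forall>x\<in>{x. x isolated_in K}. \<forall>y\<in>K. y \<noteq> x \<longrightarrow> \<delta> \<le> \<bar>y - x\<bar>))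
      (at_right 0)"
    by (rule eventually_conj[OF eventually_at_right_less])
  then obtain \<delta> :: real where "0 < \<delta>" and \<delta>: "\<And>x y. x isolated_in K \<Longrightarrow> y \<in> K \<Longrightarrow> y \<noteq> x \<Longrightarrow> \<delta> \<le> \<bar>y - x\<bar>"
    using eventually_happens'[OF trivial_limit_at_right_real] by blast
  show ?thesis
  proof (intro exI[of _ \<delta>] conjI ballI impI)
    fix a b
    assume "a \<in> K" "b \<in> K" "a < b" "b - a < \<delta>"
    then show "a islimpt K"
      using \<delta>[of a b] by (force simp: isolated_in_islimpt_iff)
  qed (rule \<open>0 < \<delta>\<close>)
qed

lemma small_tolerances_exist:
  fixes C1 C2 \<epsilon>' :: real
  assumes "0 < C1" "0 < C2" "0 < \<epsilon>'"
  shows "\<exists>\<epsilon> e. 0 < \<epsilon> \<and> 0 < e \<and> e \<le> 1 \<and> \<epsilon> * C1 + e * C2 < \<epsilon>'"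
proof (intro exI conjI)
  define e where "e = min 1 (\<epsilon>' / (4 * C2))"
  have "e * C2 \<le> \<epsilon>' / (4 * C2) * C2"
    using assms(2) by (intro mult_right_mono) (simp_all add: e_def)
  then show "\<epsilon>' / (2 * C1) * C1 + e * C2 < \<epsilon>'"
    using assms by simp
  show "0 < e" "e \<le> 1"
    using assms by (simp_all add: e_def)
qed (use assms in simp)

lemma AV_condition_of_discrete:
  fixes f g h :: "real \<Rightarrow> real" and K :: "real set"
  assumes "0 < m" "Cm m f" "Cm m g" "bounded K" "discrete_AV_condition m f g h K"
    and "\<exists>\<delta>>0. \<forall>a\<in>K. \<forall>b\<in>K. a < b \<longrightarrow> b - a < \<delta> \<longrightarrow> m = 1 \<or> a islimpt K"
  shows "AV_condition m f g h K"
  unfolding AV_condition_def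
proof (intro allI impI)
  fix \<epsilon>' :: real
  assume "0 < \<epsilon>'"
  define C1 C2 where "C1 = 4 ^ m + 2 ^ (m + 1) * lagrange_const m"
    and "C2 = 4 * lagrange_const m * (1 + lagrange_const m)"
  have "0 < lagrange_const m"
    using assms(1) by (simp add: lagrange_const_def)
  then have "0 < C1" "0 < C2"
    by (simp_all add: C1_def C2_def add_pos_pos)
  then obtain \<epsilon> e where "0 < \<epsilon>" "0 < e" "e \<le> 1" "\<epsilon> * C1 + e * C2 < \<epsilon>'"
    using small_tolerances_exist[OF _ _ \<open>0 < \<epsilon>'\<close>] by blast
  obtain \<delta>d where "0 < \<delta>d" and disc: "\<And>X a b. X \<subseteq> K \<Longrightarrow> finite X \<Longrightarrow> card X = m + 1 \<Longrightarrow>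
      diameter X < \<delta>d \<Longrightarrow> a \<in> X \<Longrightarrow> b \<in> X \<Longrightarrow> a < b \<Longrightarrow> \<bar>dA m X f g h a b / dV m X f g a b\<bar> < \<epsilon>"
    using assms(5) \<open>0 < \<epsilon>\<close> unfolding discrete_AV_condition_def by meson
  obtain \<rho>f where "0 < \<rho>f"
    and \<rho>f: "\<And>a x. a \<in> K \<Longrightarrow> \<bar>x - a\<bar> < \<rho>f \<Longrightarrow> \<bar>f x - taylorT m a f x\<bar> \<le> e * \<bar>x - a\<bar> ^ m"
    using taylorT_remainder_uniform[OF assms(2,1,4) \<open>0 < e\<close>] by blast
  obtain \<rho>g where "0 < \<rho>g"
    and \<rho>g: "\<And>a x. a \<in> K \<Longrightarrow> \<bar>x - a\<bar> < \<rho>g \<Longrightarrow> \<bar>g x - taylorT m a g x\<bar> \<le> e * \<bar>x - a\<bar> ^ m"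
    using taylorT_remainder_uniform[OF assms(3,1,4) \<open>0 < e\<close>] by blast
  obtain \<delta>0 where "0 < \<delta>0"
    and limpt: "\<And>a b. a \<in> K \<Longrightarrow> b \<in> K \<Longrightarrow> a < b \<Longrightarrow> b - a < \<delta>0 \<Longrightarrow> m = 1 \<or> a islimpt K"
    using assms(6) by blast
  show "\<exists>\<delta>>0. \<forall>a\<in>K. \<forall>b\<in>K. 0 < b - a \<and> b - a < \<delta> \<longrightarrow> \<bar>AVA m f g h a b / AVV m f g a b\<bar> < \<epsilon>'"
  proof (intro exI[of _ "min (min (\<delta>d / 2) \<delta>0) (min \<rho>f \<rho>g)"] conjI ballI impI)
    fix a b
    assume "a \<in> K" "b \<in> K" and ab: "0 < b - a \<and> b - a < min (min (\<delta>d / 2) \<delta>0) (min \<rho>f \<rho>g)"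
    then obtain X where X: "X \<subseteq> K" "finite X" "card X = m + 1" "a \<in> X" "b \<in> X"
        "X \<subseteq> {a - (b - a)..b}" "well_separated a X"
      using interpolation_nodes[OF \<open>a \<in> K\<close> \<open>b \<in> K\<close> _ assms(1) limpt] by auto
    have "b - a < \<delta>d / 2" "b - a < \<rho>f" "b - a < \<rho>g"
      using ab by auto
    have near: "\<bar>j - a\<bar> < \<rho>f" "\<bar>j - a\<bar> < \<rho>g" if "j \<in> X" for j
      using X(6) that \<open>b - a < \<rho>f\<close> \<open>b - a < \<rho>g\<close> by (auto simp: abs_less_iff)
    interpret taylor_nodes m a b e X f g
      using assms(1) ab X \<rho>f[OF \<open>a \<in> K\<close> near(1)] \<rho>g[OF \<open>a \<in> K\<close> near(2)] \<open>0 < e\<close> \<open>e \<le> 1\<close>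
      by unfold_locales auto
    have "diameter X \<le> 2 * (b - a)"
      by (rule diameter_bounds(2))
    also have "\<dots> < \<delta>d"
      using \<open>b - a < \<delta>d / 2\<close> by simp
    finally have "\<bar>dA m X f g h a b / dV m X f g a b\<bar> < \<epsilon>"
      using disc X ab by simp
    then have "\<bar>AVA m f g h a b / AVV m f g a b\<bar> \<le> \<epsilon> * C1 + e * C2"
      unfolding C1_def C2_def by (rule AVA_AVV_le)
    then show "\<bar>AVA m f g h a b / AVV m f g a b\<bar> < \<epsilon>'"
      using \<open>\<epsilon> * C1 + e * C2 < \<epsilon>'\<close> by linarith
  qed (use \<open>0 < \<delta>d\<close> \<open>0 < \<delta>0\<close> \<open>0 < \<rho>f\<close> \<open>0 < \<rho>g\<close> in simp)
qed

theorem lemma4p5: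
  fixes m :: nat and f g h :: "real \<Rightarrow> real" and K :: "real set"
  assumes "m > 0" and "Cm m f" and "Cm m g" and "Cm m h"
  shows "(compact K \<and> (\<exists>Y\<subseteq>K. finite Y \<and> card Y = m + 1)
            \<and> finite {x. x isolated_in K}
            \<and> discrete_AV_condition m f g h K
          \<longrightarrow> AV_condition m f g h K)
       \<and> (m = 1 \<and> compact K \<and> (\<exists>Y\<subseteq>K. finite Y \<and> card Y = 2)
            \<and> discrete_AV_condition m f g h K
          \<longrightarrow> AV_condition m f g h K)"
proof (intro conjI impI)
  assume K: "compact K \<and> (\<exists>Y\<subseteq>K. finite Y \<and> card Y = m + 1)
      \<and> finite {x. x isolated_in K} \<and> discrete_AV_condition m f g h K"
  then have "\<exists>\<delta>>0. \<forall>a\<in>K. \<forall>b\<in>K. a < b \<longrightarrow> b - a < \<delta> \<longrightarrow> m = 1 \<or> a islimpt K"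
    using close_pairs_islimpt by blast
  then show "AV_condition m f g h K"
    using K by (intro AV_condition_of_discrete[OF assms(1-3)]) (auto intro: compact_imp_bounded)
next
  assume K: "m = 1 \<and> compact K \<and> (\<exists>Y\<subseteq>K. finite Y \<and> card Y = 2) \<and> discrete_AV_condition m f g h K"
  then have "\<exists>\<delta>>0. \<forall>a\<in>K. \<forall>b\<in>K. a < b \<longrightarrow> b - a < \<delta> \<longrightarrow> m = 1 \<or> a islimpt K"
    by (intro exI[of _ 1]) auto
  then show "AV_condition m f g h K"
    using K by (intro AV_condition_of_discrete[OF assms(1-3)]) (auto intro: compact_imp_bounded)
qed

end
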